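(* Let $N\ge1$, $\sigma>0$, let $\psi:[0,2]\to[0,+\infty)$ be a decreasing $C^1$ function with $\psi(2)=0$ and $\psi'(2)<0$, and let $(x_i,v_i)_{i=1}^N$ be the solution of $$\dot x_i=v_i,\qquad \dot v_i=-\frac{\|v_i\|^2}{\|x_i\|^2}x_i+\sum_{j=1}^N\frac{\psi_{ij}}{N}\big(R(x_j,x_i)v_j-v_i\big)+\sum_{k=1}^N\frac{\sigma}{N}\big(\|x_i\|^2x_k-\langle x_i,x_k\rangle x_i\big),\quad \psi_{ij}=\psi(\|x_i-x_j\|),$$ with initial data satisfying $\|x_i(0)\|=1$, $\langle v_i(0),x_i(0)\rangle=0$ for all $i$. If $2\sigma>N^2\mathcal{E}(0)$, then the system has time-asymptotic flocking on the unit sphere, i.e. $$\lim_{t\to\infty}\max_{1\le i,j\le N}\|x_i(t)+x_j(t)\|\,\big\|R(x_j(t),x_i(t))v_j(t)-v_i(t)\big\|=0\quad\text{and}\quad \liminf_{t\ge0}\min_{1\le i,j\le N}\|x_i(t)+x_j(t)\|>0.$$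
   Context: $\|\cdot\|$ is the Euclidean norm, $\langle\cdot,\cdot\rangle$ the inner product on $\mathbb{R}^3$. For column vectors $x_1,x_2$ in the unit sphere with $x_1\ne-x_2$, $R(x_1,x_2)=I$ if $x_1=x_2$, and otherwise $R(x_1,x_2)=\langle x_1,x_2\rangle I-x_1x_2^T+x_2x_1^T+(1-\langle x_1,x_2\rangle)uu^T$, $u=\frac{x_1\times x_2}{\|x_1\times x_2\|}$. When $x_j=-x_i$, $\psi_{ij}R(x_j,x_i)v_j$ and $\|x_i+x_j\|\,\|R(x_j,x_i)v_j-v_i\|$ are taken to be $0$. The energy is $\mathcal{E}=\frac1N\sum_{k=1}^N\|v_k\|^2+\frac{\sigma}{2N^2}\sum_{k,l=1}^N\|x_k-x_l\|^2$. "Time-asymptotic flocking on a sphere" means exactly the two displayed conditions (velocity alignment and antipodal points avoidance). *)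

theory Defs
  imports "HOL-Analysis.Analysis"
begin

definition outer :: "real^3 \<Rightarrow> real^3 \<Rightarrow> real^3^3" where
  "outer a b = (\<chi> i j. a $ i * b $ j)"

definition Rot :: "real^3 \<Rightarrow> real^3 \<Rightarrow> real^3^3" where
  "Rot x1 x2 = (if x1 = x2 then mat 1 else
     (let u = (1 / norm (cross3 x1 x2)) *\<^sub>R cross3 x1 x2 in
        (x1 \<bullet> x2) *\<^sub>R mat 1 - outer x1 x2 + outer x2 x1 + (1 - x1 \<bullet> x2) *\<^sub>R outer u u))"

definition psiRv :: "(real \<Rightarrow> real) \<Rightarrow> real^3 \<Rightarrow> real^3 \<Rightarrow> real^3 \<Rightarrow> real^3" where
  "psiRv \<psi> xi xj vj = (if xj = - xi then 0 else \<psi> (norm (xi - xj)) *\<^sub>R (Rot xj xi *v vj))"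

definition align_err :: "real^3 \<Rightarrow> real^3 \<Rightarrow> real^3 \<Rightarrow> real^3 \<Rightarrow> real" where
  "align_err xi xj vi vj = (if xj = - xi then 0 else norm (xi + xj) * norm (Rot xj xi *v vj - vi))"

definition energy :: "nat \<Rightarrow> real \<Rightarrow> (nat \<Rightarrow> real^3) \<Rightarrow> (nat \<Rightarrow> real^3) \<Rightarrow> real" where
  "energy N \<sigma> x v = (1 / real N) * (\<Sum>k<N. (norm (v k))\<^sup>2)
     + \<sigma> / (2 * (real N)\<^sup>2) * (\<Sum>k<N. \<Sum>l<N. (norm (x k - x l))\<^sup>2)"

end

theory Submission
  imports Defs
begin

text \<open>
  While all particles lie on the unit sphere with tangent velocities, R(x_j, x_i) maps the
  tangent plane at x_j isometrically onto the one at x_i, and the energy decays at the rate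
  E' = - (1/N^2) sum_ij psi_ij |R(x_j, x_i) v_j - v_i|^2.  Hence |x_i - x_j|^2 stays below
  2 N^2 E(0) / sigma < 4: no pair comes close to being antipodal, which bounds |x_i + x_j| from
  below and, because psi'(2) < 0 makes psi positive on [0, 2), bounds all weights psi_ij from
  below.  The sphere really is invariant by a continuous induction: near the sphere and away
  from antipodal pairs the defect Q = sum_i (|x_i|^2 - 1)^2 + (x_i . v_i)^2 satisfies Q' <= L Q,
  and Gronwall keeps it zero.  Finally the dissipation has finite integral and is uniformly
  continuous in time, so it tends to 0 by Barbalat's lemma; this is velocity alignment.
\<close>

section \<open>The rotation between tangent planes\<close>

lemma outer_mult_vector: "outer a b *v q = (b \<bullet> q) *\<^sub>R a"
  by (simp add: outer_def vec_eq_iff matrix_vector_mult_def inner_vec_def sum_3 algebra_simps)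

lemma scaleR_matrix_vector_mult: "(c *\<^sub>R A) *v (q::real^'n) = c *\<^sub>R (A *v q)"
  by (simp add: vec_eq_iff matrix_vector_mult_def sum_distrib_left algebra_simps)

lemma Rot_mult_vector: "Rot a b *v q = (if a = b then q else
   (a \<bullet> b) *\<^sub>R q - (b \<bullet> q) *\<^sub>R a + (a \<bullet> q) *\<^sub>R b
   + ((1 - a \<bullet> b) * (cross3 a b \<bullet> q) / (norm (cross3 a b))\<^sup>2) *\<^sub>R cross3 a b)"
  by (simp add: Rot_def Let_def matrix_vector_mult_add_rdistrib matrix_vector_mult_diff_rdistrib
      outer_mult_vector power2_eq_square scaleR_matrix_vector_mult)

lemma inner_Rot_mult_vector:
  "b \<bullet> (Rot a b *v q) = (if a = b then a \<bullet> q else (b \<bullet> b) * (a \<bullet> q))"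
  by (auto simp: Rot_mult_vector inner_add_right inner_diff_right dot_cross_self inner_commute)

lemma inner_cross3_square:
  "(cross3 a b \<bullet> (q::real^3))\<^sup>2 = (a \<bullet> a) * (b \<bullet> b) * (q \<bullet> q) + 2 * (a \<bullet> b) * (b \<bullet> q) * (q \<bullet> a)
     - (a \<bullet> a) * (b \<bullet> q)\<^sup>2 - (b \<bullet> b) * (a \<bullet> q)\<^sup>2 - (q \<bullet> q) * (a \<bullet> b)\<^sup>2"
  by (simp add: cross3_def inner_vec_def sum_3 power2_eq_square algebra_simps)

lemma unit_one_plus_inner_pos:
  fixes a b :: "'a::real_inner"
  assumes "norm a = 1" "norm b = 1" "a \<noteq> - b"
  shows "1 + a \<bullet> b > 0"
proof -
  have "a + b \<noteq> 0" using assms(3) by (auto simp: eq_neg_iff_add_eq_0)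
  then have "(a + b) \<bullet> (a + b) > 0" by simp
  moreover have "(a + b) \<bullet> (a + b) = 2 + 2 * (a \<bullet> b)"
    using assms(1,2) by (simp add: inner_add_left inner_add_right inner_commute norm_eq_1)
  ultimately show ?thesis by simp
qed

lemma unit_one_minus_inner_pos:
  fixes a b :: "'a::real_inner"
  assumes "norm a = 1" "norm b = 1" "a \<noteq> b"
  shows "1 - a \<bullet> b > 0"
  using unit_one_plus_inner_pos[of a "- b"] assms by simp

text \<open>Unlike \<^const>\<open>Rot\<close>, this closed form has no case split at \<open>a = b\<close>; it agrees with
  \<^const>\<open>Rot\<close> on the unit sphere away from antipodal pairs and is continuous there.\<close>

definition rot_unit :: "real^3 \<Rightarrow> real^3 \<Rightarrow> real^3 \<Rightarrow> real^3" where
  "rot_unit a b q = (a \<bullet> b) *\<^sub>R q - (b \<bullet> q) *\<^sub>R a + (a \<bullet> q) *\<^sub>R b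
     + ((cross3 a b \<bullet> q) / (1 + a \<bullet> b)) *\<^sub>R cross3 a b"

lemma Rot_mult_vector_unit:
  fixes a b :: "real^3"
  assumes a: "norm a = 1" and b: "norm b = 1" and ab: "a \<noteq> - b"
  shows "Rot a b *v q = rot_unit a b q"
proof (cases "a = b")
  case True
  then show ?thesis using a by (simp add: Rot_mult_vector rot_unit_def norm_eq_1)
next
  case False
  have cross: "(norm (cross3 a b))\<^sup>2 = (1 - a \<bullet> b) * (1 + a \<bullet> b)"
    using norm_cross_dot[of a b] a b by (simp add: algebra_simps power2_eq_square)
  have "(1 - a \<bullet> b) * (cross3 a b \<bullet> q) / (norm (cross3 a b))\<^sup>2 = (cross3 a b \<bullet> q) / (1 + a \<bullet> b)"
    unfolding cross using unit_one_minus_inner_pos[OF a b False] by simp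
  then show ?thesis using False by (simp add: Rot_mult_vector rot_unit_def)
qed

lemma norm_rot_unit:
  fixes a b q :: "real^3"
  assumes a: "norm a = 1" and b: "norm b = 1" and pos: "1 + a \<bullet> b > 0" and tangent: "a \<bullet> q = 0"
  shows "norm (rot_unit a b q) = norm q"
proof -
  let ?c = "a \<bullet> b" and ?w = "cross3 a b"
  have aa: "a \<bullet> a = 1" and bb: "b \<bullet> b = 1" using a b by (simp_all add: norm_eq_1)
  have wq: "(?w \<bullet> q)\<^sup>2 = (1 - ?c\<^sup>2) * (q \<bullet> q) - (b \<bullet> q)\<^sup>2"
    using inner_cross3_square[of a b q] aa bb tangent by (simp add: inner_commute algebra_simps)
  have ww: "?w \<bullet> ?w = 1 - ?c\<^sup>2"
    using norm_cross_dot[of a b] a b by (simp add: dot_square_norm power2_eq_square)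
  define \<gamma> where "\<gamma> = (?w \<bullet> q) / (1 + ?c)"
  have \<gamma>: "\<gamma> * (1 + ?c) = ?w \<bullet> q" using pos by (simp add: \<gamma>_def)
  have expand: "(x *\<^sub>R q - y *\<^sub>R a + z *\<^sub>R w) \<bullet> (x *\<^sub>R q - y *\<^sub>R a + z *\<^sub>R w)
     = x\<^sup>2 * (q \<bullet> q) + y\<^sup>2 * (a \<bullet> a) + z\<^sup>2 * (w \<bullet> w) - 2*x*y*(a \<bullet> q) + 2*x*z*(w \<bullet> q) - 2*y*z*(a \<bullet> w)"
    for x y z and w :: "real^3"
    by (simp add: inner_commute power2_eq_square algebra_simps)
  have rot: "rot_unit a b q = ?c *\<^sub>R q - (b \<bullet> q) *\<^sub>R a + \<gamma> *\<^sub>R ?w"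
    using tangent by (simp add: rot_unit_def \<gamma>_def)
  have square: "rot_unit a b q \<bullet> rot_unit a b q
      = ?c\<^sup>2 * (q \<bullet> q) + (b \<bullet> q)\<^sup>2 + \<gamma>\<^sup>2 * (?w \<bullet> ?w) + 2 * ?c * \<gamma> * (?w \<bullet> q)"
    unfolding rot expand using tangent aa by (simp add: dot_cross_self)
  have "\<gamma>\<^sup>2 * (?w \<bullet> ?w) + 2 * ?c * \<gamma> * (?w \<bullet> q) = (?w \<bullet> q)\<^sup>2"
    unfolding ww \<gamma>[symmetric] by (simp add: power2_eq_square algebra_simps)
  then show ?thesis using square wq by (simp add: norm_eq_sqrt_inner algebra_simps)
qed

lemma norm_Rot_mult_vector_tangent:
  fixes a b q :: "real^3"
  assumes "norm a = 1" "norm b = 1" "a \<noteq> - b" "a \<bullet> q = 0"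
  shows "norm (Rot a b *v q) = norm q"
  using assms by (simp add: Rot_mult_vector_unit norm_rot_unit unit_one_plus_inner_pos)

section \<open>Real analysis\<close>

lemma has_real_derivative_inner:
  fixes f g :: "real \<Rightarrow> 'a::real_inner"
  assumes "(f has_vector_derivative f') (at t within S)" "(g has_vector_derivative g') (at t within S)"
  shows "((\<lambda>s. f s \<bullet> g s) has_real_derivative f' \<bullet> g t + f t \<bullet> g') (at t within S)"
  using has_derivative_inner[OF assms[unfolded has_vector_derivative_def]]
  by (rule has_derivative_imp_has_field_derivative) (simp add: algebra_simps)

lemma has_real_derivative_nonpos_imp_le:
  fixes g :: "real \<Rightarrow> real"
  assumes "a \<le> b" and "{a..b} \<subseteq> S"
    and deriv: "\<And>s. s \<in> {a..b} \<Longrightarrow> (g has_real_derivative g' s) (at s within S)"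
    and nonpos: "\<And>s. s \<in> {a..b} \<Longrightarrow> g' s \<le> 0"
  shows "g b \<le> g a"
proof -
  have "\<exists>s\<in>{a..b}. g b - g a = g' s * (b - a)"
    using assms(1,2) deriv
    by (intro mvt_very_simple) (auto simp: has_field_derivative_def intro: has_derivative_subset)
  then obtain s where "s \<in> {a..b}" "g b - g a = g' s * (b - a)" by blast
  moreover have "g' s * (b - a) \<le> 0"
    using nonpos \<open>s \<in> {a..b}\<close> \<open>a \<le> b\<close> by (intro mult_nonpos_nonneg) auto
  ultimately show ?thesis by simp
qed

lemma bounded_vector_derivative_imp_lipschitz:
  fixes f :: "real \<Rightarrow> 'a::real_normed_vector"
  assumes "\<And>t. t \<in> S \<Longrightarrow> (f has_vector_derivative f' t) (at t within S)" and "convex S"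
    and "\<And>t. t \<in> S \<Longrightarrow> norm (f' t) \<le> L" and "0 \<le> L"
  shows "L-lipschitz_on S f"
  using assms
  by (intro bounded_derivative_imp_lipschitz[where f' = "\<lambda>t h. h *\<^sub>R f' t"])
     (auto simp: has_vector_derivative_def onorm_scaleR_left[OF bounded_linear_ident] onorm_id)

lemma nonneg_real_induct:
  fixes P :: "real \<Rightarrow> bool"
  assumes closed: "\<And>T. T \<ge> 0 \<Longrightarrow> (\<And>s. 0 \<le> s \<Longrightarrow> s < T \<Longrightarrow> P s) \<Longrightarrow> P T"
    and step: "\<And>T. T \<ge> 0 \<Longrightarrow> (\<And>s. 0 \<le> s \<Longrightarrow> s \<le> T \<Longrightarrow> P s) \<Longrightarrow> \<exists>h>0. \<forall>s\<in>{T..T+h}. P s"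
    and "t \<ge> 0"
  shows "P t"
proof (rule ccontr)
  assume "\<not> P t"
  define B where "B = {s. 0 \<le> s \<and> \<not> P s}"
  have tB: "t \<in> B" and bdd: "bdd_below B"
    using \<open>\<not> P t\<close> \<open>t \<ge> 0\<close> by (auto simp: B_def intro: bdd_belowI[of _ 0])
  define T where "T = Inf B"
  have T: "T \<ge> 0" unfolding T_def using tB by (intro cInf_greatest) (auto simp: B_def)
  have below: "P s" if "0 \<le> s" "s < T" for s
    using that cInf_lower[OF _ bdd, of s] by (force simp: B_def T_def)
  then have "P s" if "0 \<le> s" "s \<le> T" for s
    using that closed[OF T] by (cases "s = T") auto
  then obtain h where "h > 0" and h: "\<forall>s\<in>{T..T+h}. P s" using step[OF T] by blast
  then have "Inf B < T + h" unfolding T_def by simp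
  then obtain b where "b \<in> B" "b < T + h" using cInf_less_iff[OF _ bdd] tB by blast
  moreover have "T \<le> b" unfolding T_def using \<open>b \<in> B\<close> bdd by (rule cInf_lower)
  ultimately show False using h by (auto simp: B_def)
qed

lemma gronwall_zero:
  fixes Q Q' :: "real \<Rightarrow> real"
  assumes deriv: "\<And>r. r \<in> {a..b} \<Longrightarrow> (Q has_real_derivative Q' r) (at r within {a..b})"
    and growth: "\<And>r. r \<in> {a..b} \<Longrightarrow> Q' r \<le> L * Q r"
    and nonneg: "\<And>r. r \<in> {a..b} \<Longrightarrow> Q r \<ge> 0"
    and start: "Q a = 0" and s: "s \<in> {a..b}"
  shows "Q s = 0"
proof -
  define g where "g r = Q r * exp (- L * r)" for r
  have "g s \<le> g a"
  proof (rule has_real_derivative_nonpos_imp_le[where S = "{a..b}" and g = g and a = a and b = s])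
    fix r assume r: "r \<in> {a..s}"
    then show "(g has_real_derivative Q' r * exp (- L * r) + Q r * (exp (- L * r) * - L))
        (at r within {a..b})"
      unfolding g_def[abs_def] using s by (auto intro!: derivative_eq_intros deriv)
    show "Q' r * exp (- L * r) + Q r * (exp (- L * r) * - L) \<le> 0"
      using growth[of r] r s by (simp add: algebra_simps mult_right_mono)
  qed (use s in auto)
  then have "Q s \<le> 0" using start by (simp add: g_def mult_le_0_iff)
  then show ?thesis using nonneg[OF s] by linarith
qed

lemma has_real_derivative_le_imp_decrease:
  fixes E E' :: "real \<Rightarrow> real"
  assumes deriv: "\<And>t. t \<ge> 0 \<Longrightarrow> (E has_real_derivative E' t) (at t within {0..})"
    and "0 \<le> t" "0 \<le> h" and rate: "\<And>r. r \<in> {t..t+h} \<Longrightarrow> E' r \<le> - c"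
  shows "E (t + h) \<le> E t - c * h"
proof -
  have "E (t + h) + c * (t + h) \<le> E t + c * t"
  proof (rule has_real_derivative_nonpos_imp_le[where S = "{0..}" and g = "\<lambda>r. E r + c * r"
        and g' = "\<lambda>r. E' r + c" and a = t and b = "t + h"])
    fix r assume r: "r \<in> {t..t+h}"
    then show "((\<lambda>r. E r + c * r) has_real_derivative E' r + c) (at r within {0..})"
      using \<open>0 \<le> t\<close> by (auto intro!: derivative_eq_intros deriv)
    show "E' r + c \<le> 0" using rate[OF r] by simp
  qed (use assms in auto)
  then show ?thesis by (simp add: algebra_simps)
qed

lemma barbalat:
  fixes E E' f :: "real \<Rightarrow> real"
  assumes deriv: "\<And>t. t \<ge> 0 \<Longrightarrow> (E has_real_derivative E' t) (at t within {0..})"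
    and dissipation: "\<And>t. t \<ge> 0 \<Longrightarrow> E' t \<le> - f t"
    and nonneg: "\<And>t. t \<ge> 0 \<Longrightarrow> f t \<ge> 0"
    and bdd: "bdd_below (E ` {0..})"
    and uc: "uniformly_continuous_on {0..} f"
  shows "(f \<longlongrightarrow> 0) at_top"
proof (rule order_tendstoI)
  fix a :: real assume "a < 0"
  then show "eventually (\<lambda>t. a < f t) at_top"
    using nonneg by (intro eventually_at_top_linorderI[of 0]) (auto intro: less_le_trans)
next
  fix \<epsilon> :: real assume \<epsilon>: "\<epsilon> > 0"
  show "eventually (\<lambda>t. f t < \<epsilon>) at_top"
  proof (rule ccontr)
    assume "\<not> eventually (\<lambda>t. f t < \<epsilon>) at_top"
    then have often: "\<forall>T. \<exists>t\<ge>T. \<epsilon> \<le> f t" unfolding eventually_at_top_linorder by (auto simp: not_less)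
    obtain \<delta> where "\<delta> > 0" and \<delta>: "\<forall>t\<in>{0..}. \<forall>s\<in>{0..}. dist s t < \<delta> \<longrightarrow> dist (f s) (f t) < \<epsilon> / 2"
      using uc \<epsilon> unfolding uniformly_continuous_on_def by (metis half_gt_zero)
    define h where "h = \<delta> / 2"
    obtain T where "T \<ge> 0" and T: "E T < Inf (E ` {0..}) + \<epsilon> / 2 * h"
      using cInf_lessD[of "E ` {0..}" "Inf (E ` {0..}) + \<epsilon> / 2 * h"] \<epsilon> \<open>\<delta> > 0\<close> by (auto simp: h_def)
    obtain t where "t \<ge> T" and "\<epsilon> \<le> f t" using often by blast
    then have t: "t \<ge> 0" using \<open>T \<ge> 0\<close> by simp
    have "E t \<le> E T"
    proof (rule has_real_derivative_nonpos_imp_le[where S = "{0..}" and g = E and a = T and b = t])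
      fix s assume "s \<in> {T..t}"
      then have "s \<ge> 0" using \<open>T \<ge> 0\<close> by auto
      then show "(E has_real_derivative E' s) (at s within {0..})" by (rule deriv)
      show "E' s \<le> 0" using dissipation[OF \<open>s \<ge> 0\<close>] nonneg[OF \<open>s \<ge> 0\<close>] by simp
    qed (use \<open>T \<ge> 0\<close> \<open>t \<ge> T\<close> in auto)
    have big: "\<epsilon> / 2 \<le> f r" if "r \<in> {t..t+h}" for r
    proof -
      have "dist (f r) (f t) < \<epsilon> / 2"
        using \<delta> that t \<open>\<delta> > 0\<close> by (auto simp: h_def dist_real_def)
      then show ?thesis using \<open>\<epsilon> \<le> f t\<close> unfolding dist_real_def by linarith
    qed
    have "E (t + h) \<le> E t - \<epsilon> / 2 * h"
    proof (rule has_real_derivative_le_imp_decrease[OF deriv])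
      fix r assume r: "r \<in> {t..t+h}"
      then show "E' r \<le> - (\<epsilon> / 2)" using dissipation[of r] big[OF r] t by auto
    qed (use t \<open>\<delta> > 0\<close> in \<open>auto simp: h_def\<close>)
    then have "E (t + h) < Inf (E ` {0..})"
      using T \<open>E t \<le> E T\<close> by linarith
    moreover have "Inf (E ` {0..}) \<le> E (t + h)"
      using t \<open>\<delta> > 0\<close> bdd by (intro cInf_lower) (auto simp: h_def)
    ultimately show False by simp
  qed
qed

lemma decreasing_pos_before_zero:
  fixes f :: "real \<Rightarrow> real"
  assumes deriv: "(f has_real_derivative f') (at b within {a..b})" and "f' < 0" and "f b = 0"
    and decreasing: "\<And>r s. a \<le> r \<Longrightarrow> r \<le> s \<Longrightarrow> s \<le> b \<Longrightarrow> f s \<le> f r"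
    and r: "a \<le> r" "r < b"
  shows "f r > 0"
proof -
  have "((\<lambda>y. (f y - f b) / (y - b)) \<longlongrightarrow> f') (at b within {a..b})"
    using deriv has_field_derivative_iff by blast
  from order_tendstoD(2)[OF this \<open>f' < 0\<close>]
  obtain e where "e > 0" and e: "\<forall>y\<in>{a..b}. 0 < dist y b \<and> dist y b < e \<longrightarrow> (f y - f b) / (y - b) < 0"
    unfolding eventually_at by auto
  define y where "y = max r (b - e / 2)"
  have y: "a \<le> y" "y < b" "0 < dist y b" "dist y b < e" "r \<le> y"
    using r \<open>e > 0\<close> unfolding y_def dist_real_def by auto
  then have "f y / (y - b) < 0" using e \<open>f b = 0\<close> by auto
  then have "f y > 0" using y by (simp add: divide_less_0_iff)
  then show ?thesis using decreasing[of r y] y r by auto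
qed

lemma uniformly_continuous_on_subset:
  fixes g :: "'a::metric_space \<Rightarrow> 'b::metric_space"
  shows "uniformly_continuous_on K g \<Longrightarrow> T \<subseteq> K \<Longrightarrow> uniformly_continuous_on T g"
  unfolding uniformly_continuous_on_def by (meson subsetD)

section \<open>The flocking system\<close>

lemma finite_index_pairs: "finite {f i j |i j. i < (N::nat) \<and> j < N}"
proof -
  have "{f i j |i j. i < N \<and> j < N} = (\<lambda>(i, j). f i j) ` ({..<N} \<times> {..<N})" by auto
  then show ?thesis by simp
qed

locale sphere_flocking =
  fixes N :: nat and \<sigma> :: real
    and \<psi> \<psi>' :: "real \<Rightarrow> real"
    and x v :: "nat \<Rightarrow> real \<Rightarrow> real^3"
  assumes N: "N \<ge> 1"
    and sigma: "\<sigma> > 0"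
    and psi_decr: "\<And>a b. 0 \<le> a \<Longrightarrow> a \<le> b \<Longrightarrow> b \<le> 2 \<Longrightarrow> \<psi> b \<le> \<psi> a"
    and psi_deriv: "\<And>s. s \<in> {0..2} \<Longrightarrow> (\<psi> has_real_derivative \<psi>' s) (at s within {0..2})"
    and psi_2: "\<psi> 2 = 0"
    and psi'_2: "\<psi>' 2 < 0"
    and ode_x: "\<And>i t. i < N \<Longrightarrow> t \<ge> 0 \<Longrightarrow>
        ((x i) has_vector_derivative v i t) (at t within {0..})"
    and ode_v: "\<And>i t. i < N \<Longrightarrow> t \<ge> 0 \<Longrightarrow>
        ((v i) has_vector_derivative
           (- ((norm (v i t))\<^sup>2 / (norm (x i t))\<^sup>2) *\<^sub>R x i t
            + (\<Sum>j<N. (1 / real N) *\<^sub>R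
                 (psiRv \<psi> (x i t) (x j t) (v j t) - \<psi> (norm (x i t - x j t)) *\<^sub>R v i t))
            + (\<Sum>k<N. (\<sigma> / real N) *\<^sub>R
                 ((norm (x i t))\<^sup>2 *\<^sub>R x k t - (x i t \<bullet> x k t) *\<^sub>R x i t))))
         (at t within {0..})"
    and init_sphere: "\<And>i. i < N \<Longrightarrow> norm (x i 0) = 1"
    and init_tangent: "\<And>i. i < N \<Longrightarrow> v i 0 \<bullet> x i 0 = 0"
    and energy_small: "2 * \<sigma> > (real N)\<^sup>2 * energy N \<sigma> (\<lambda>k. x k 0) (\<lambda>k. v k 0)"
begin

lemma psi_bounds: "s \<in> {0..2} \<Longrightarrow> 0 \<le> \<psi> s \<and> \<psi> s \<le> \<psi> 0"
  using psi_decr[of s 2] psi_decr[of 0 s] psi_2 by auto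

lemma psi_pos: "0 \<le> r \<Longrightarrow> r < 2 \<Longrightarrow> \<psi> r > 0"
  using psi_deriv[of 2] psi'_2 psi_2 psi_decr by (intro decreasing_pos_before_zero) auto

lemma psi_continuous_on: "continuous_on {0..2} \<psi>"
  unfolding continuous_on_eq_continuous_within
  by (intro ballI DERIV_continuous[OF psi_deriv]) auto

definition coupling :: "nat \<Rightarrow> nat \<Rightarrow> real \<Rightarrow> real^3" where
  "coupling i j t = psiRv \<psi> (x i t) (x j t) (v j t) - \<psi> (norm (x i t - x j t)) *\<^sub>R v i t"

definition accel :: "nat \<Rightarrow> real \<Rightarrow> real^3" where
  "accel i t = - ((norm (v i t))\<^sup>2 / (norm (x i t))\<^sup>2) *\<^sub>R x i t
     + (\<Sum>j<N. (1 / real N) *\<^sub>R coupling i j t)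
     + (\<Sum>k<N. (\<sigma> / real N) *\<^sub>R ((norm (x i t))\<^sup>2 *\<^sub>R x k t - (x i t \<bullet> x k t) *\<^sub>R x i t))"

lemma v_has_vector_derivative:
  "i < N \<Longrightarrow> t \<ge> 0 \<Longrightarrow> (v i has_vector_derivative accel i t) (at t within {0..})"
  using ode_v unfolding accel_def coupling_def by blast

lemma x_continuous_on: "i < N \<Longrightarrow> continuous_on {0..} (x i)"
  by (rule continuous_on_vector_derivative) (use ode_x in auto)

definition E :: "real \<Rightarrow> real" where
  "E t = energy N \<sigma> (\<lambda>k. x k t) (\<lambda>k. v k t)"

definition on_sphere :: "real \<Rightarrow> bool" where
  "on_sphere t \<longleftrightarrow> (\<forall>i<N. norm (x i t) = 1 \<and> x i t \<bullet> v i t = 0)"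

subsection \<open>Energy dissipation\<close>

definition E' :: "real \<Rightarrow> real" where
  "E' t = (1 / real N) * (\<Sum>k<N. 2 * (v k t \<bullet> accel k t))
     + \<sigma> / (2 * (real N)\<^sup>2) * (\<Sum>k<N. \<Sum>l<N. 2 * ((x k t - x l t) \<bullet> (v k t - v l t)))"

lemma E_has_real_derivative: "t \<ge> 0 \<Longrightarrow> (E has_real_derivative E' t) (at t within {0..})"
proof -
  assume t: "t \<ge> 0"
  have E: "E = (\<lambda>t. (1 / real N) * (\<Sum>k<N. v k t \<bullet> v k t)
      + \<sigma> / (2 * (real N)\<^sup>2) * (\<Sum>k<N. \<Sum>l<N. (x k t - x l t) \<bullet> (x k t - x l t)))"
    unfolding E_def energy_def by (simp add: power2_norm_eq_inner)
  have diff: "((\<lambda>s. x k s - x l s) has_vector_derivative v k t - v l t) (at t within {0..})"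
    if "k < N" "l < N" for k l
    using ode_x that t by (intro derivative_intros) auto
  have kinetic: "((\<lambda>s. v k s \<bullet> v k s) has_real_derivative 2 * (v k t \<bullet> accel k t)) (at t within {0..})"
    if "k < N" for k
    using has_real_derivative_inner[OF v_has_vector_derivative[OF that t] v_has_vector_derivative[OF that t]]
    by (simp add: inner_commute)
  have potential: "((\<lambda>s. (x k s - x l s) \<bullet> (x k s - x l s)) has_real_derivative
      2 * ((x k t - x l t) \<bullet> (v k t - v l t))) (at t within {0..})" if "k < N" "l < N" for k l
    using has_real_derivative_inner[OF diff[OF that] diff[OF that]] by (simp add: inner_commute)
  show ?thesis unfolding E E'_def
    by (intro DERIV_add DERIV_cmult DERIV_sum) (auto intro: kinetic potential)
qed

definition dissip :: "nat \<Rightarrow> nat \<Rightarrow> real \<Rightarrow> real" where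
  "dissip i j t = (if x j t = - x i t then 0 else
     \<psi> (norm (x i t - x j t)) * (norm (Rot (x j t) (x i t) *v v j t - v i t))\<^sup>2)"

definition dissipation :: "real \<Rightarrow> real" where
  "dissipation t = (\<Sum>i<N. \<Sum>j<N. dissip i j t)"

lemma on_sphere_dist_le: "on_sphere t \<Longrightarrow> i < N \<Longrightarrow> j < N \<Longrightarrow> norm (x i t - x j t) \<le> 2"
  unfolding on_sphere_def using norm_triangle_ineq4[of "x i t" "x j t"] by auto

lemma dissip_nonneg: "on_sphere t \<Longrightarrow> i < N \<Longrightarrow> j < N \<Longrightarrow> dissip i j t \<ge> 0"
  unfolding dissip_def using on_sphere_dist_le psi_bounds by auto

lemma dissipation_nonneg: "on_sphere t \<Longrightarrow> dissipation t \<ge> 0"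
  unfolding dissipation_def using dissip_nonneg by (intro sum_nonneg) auto

text \<open>Since \<open>Rot\<close> is an isometry on tangent vectors, the alignment force of \<open>j\<close> on \<open>i\<close> splits
  into a dissipative part and a part that is antisymmetric in \<open>i, j\<close>.\<close>

lemma inner_coupling_on_sphere:
  assumes S: "on_sphere t" and i: "i < N" and j: "j < N"
  shows "2 * (v i t \<bullet> coupling i j t)
    = - dissip i j t + \<psi> (norm (x i t - x j t)) * (v j t \<bullet> v j t - v i t \<bullet> v i t)"
proof (cases "x j t = - x i t")
  case True
  then have "norm (x i t - x j t) = 2" using S i by (simp add: on_sphere_def flip: scaleR_2)
  then show ?thesis using True unfolding coupling_def psiRv_def dissip_def by (simp add: psi_2)
next
  case False
  let ?Rv = "Rot (x j t) (x i t) *v v j t" and ?p = "\<psi> (norm (x i t - x j t))"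
  have "norm ?Rv = norm (v j t)"
    using S i j False by (intro norm_Rot_mult_vector_tangent) (auto simp: on_sphere_def)
  then have "?Rv \<bullet> ?Rv = v j t \<bullet> v j t" by (metis power2_norm_eq_inner)
  then have "(norm (?Rv - v i t))\<^sup>2 = v j t \<bullet> v j t - 2 * (v i t \<bullet> ?Rv) + v i t \<bullet> v i t"
    by (simp add: power2_norm_eq_inner inner_diff_left inner_diff_right inner_commute)
  then have "dissip i j t = ?p * (v j t \<bullet> v j t - 2 * (v i t \<bullet> ?Rv) + v i t \<bullet> v i t)"
    unfolding dissip_def using False by simp
  moreover have "2 * (v i t \<bullet> coupling i j t) = 2 * ?p * (v i t \<bullet> ?Rv) - 2 * ?p * (v i t \<bullet> v i t)"
    unfolding coupling_def psiRv_def using False by (simp add: inner_diff_right)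
  ultimately show ?thesis by (simp add: algebra_simps)
qed

lemma E'_on_sphere:
  assumes S: "on_sphere t"
  shows "E' t = - dissipation t / (real N)\<^sup>2"
proof -
  have xx: "x k t \<bullet> x k t = 1" and xv: "x k t \<bullet> v k t = 0" if "k < N" for k
    using S that unfolding on_sphere_def by (auto simp: norm_eq_1)
  define A where "A = (\<Sum>k<N. \<Sum>j<N. v k t \<bullet> coupling k j t)"
  define S2 where "S2 = (\<Sum>k<N. \<Sum>l<N. v k t \<bullet> x l t)"
  have "(\<Sum>k<N. \<Sum>j<N. \<psi> (norm (x k t - x j t)) * (v j t \<bullet> v j t))
      = (\<Sum>k<N. \<Sum>j<N. \<psi> (norm (x k t - x j t)) * (v k t \<bullet> v k t))"
    by (subst sum.swap) (simp add: norm_minus_commute)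
  moreover have "(\<Sum>k<N. \<Sum>j<N. 2 * (v k t \<bullet> coupling k j t)) = (\<Sum>k<N. \<Sum>j<N. - dissip k j t
      + (\<psi> (norm (x k t - x j t)) * (v j t \<bullet> v j t) - \<psi> (norm (x k t - x j t)) * (v k t \<bullet> v k t)))"
    using inner_coupling_on_sphere[OF S] by (intro sum.cong refl) (simp add: algebra_simps)
  ultimately have "(\<Sum>k<N. \<Sum>j<N. 2 * (v k t \<bullet> coupling k j t)) = - dissipation t"
    unfolding dissipation_def sum.distrib sum_subtractf sum_negf by simp
  then have A: "2 * A = - dissipation t" unfolding A_def by (simp add: sum_distrib_left)
  have V: "(\<Sum>k<N. 2 * (v k t \<bullet> accel k t)) = (2 / real N) * A + (2 * \<sigma> / real N) * S2"
    using xx xv unfolding accel_def A_def S2_def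
    by (simp add: inner_add_right inner_diff_right inner_sum_right power2_norm_eq_inner inner_commute
        sum.distrib sum_distrib_left sum_divide_distrib mult.assoc)
  \<comment> \<open>the attraction is the tangential gradient of the potential, so the terms in \<open>S2\<close> cancel\<close>
  have P: "(\<Sum>k<N. \<Sum>l<N. 2 * ((x k t - x l t) \<bullet> (v k t - v l t))) = - 4 * S2"
  proof -
    have "(\<Sum>k<N. \<Sum>l<N. 2 * ((x k t - x l t) \<bullet> (v k t - v l t)))
        = - 2 * (\<Sum>k<N. \<Sum>l<N. v l t \<bullet> x k t) - 2 * S2"
      using xv unfolding S2_def
      by (simp add: inner_diff_left inner_diff_right inner_commute sum_subtractf sum_distrib_left)
    then show ?thesis unfolding S2_def by (subst (asm) sum.swap) simp
  qed
  show ?thesis unfolding E'_def V P using A N by (simp add: field_simps power2_eq_square)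
qed

lemma E_nonneg: "E t \<ge> 0"
  unfolding E_def energy_def using sigma by (intro add_nonneg_nonneg mult_nonneg_nonneg sum_nonneg) auto

lemma E_decreasing_on_sphere:
  assumes "0 \<le> t1" "t1 \<le> t2" and S: "\<And>s. s \<in> {t1..t2} \<Longrightarrow> on_sphere s"
  shows "E t2 \<le> E t1"
proof (rule has_real_derivative_nonpos_imp_le[where S = "{0..}" and g = E and g' = E' and a = t1 and b = t2])
  fix s assume s: "s \<in> {t1..t2}"
  then show "(E has_real_derivative E' s) (at s within {0..})"
    using assms by (intro E_has_real_derivative) auto
  show "E' s \<le> 0" using E'_on_sphere[OF S[OF s]] dissipation_nonneg[OF S[OF s]] by simp
qed (use assms in auto)

lemma dist_sq_le_E:
  assumes i: "i < N" and j: "j < N"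
  shows "(norm (x i t - x j t))\<^sup>2 \<le> 2 * (real N)\<^sup>2 * E t / \<sigma>"
proof -
  have "(norm (x i t - x j t))\<^sup>2 \<le> (\<Sum>l<N. (norm (x i t - x l t))\<^sup>2)"
    using j by (intro member_le_sum) auto
  also have "\<dots> \<le> (\<Sum>k<N. \<Sum>l<N. (norm (x k t - x l t))\<^sup>2)"
    using i by (intro member_le_sum[where f = "\<lambda>k. \<Sum>l<N. (norm (x k t - x l t))\<^sup>2"] sum_nonneg) auto
  finally have "\<sigma> / (2 * (real N)\<^sup>2) * (norm (x i t - x j t))\<^sup>2
      \<le> \<sigma> / (2 * (real N)\<^sup>2) * (\<Sum>k<N. \<Sum>l<N. (norm (x k t - x l t))\<^sup>2)"
    using sigma by (intro mult_left_mono) auto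
  also have "\<dots> \<le> E t" unfolding E_def energy_def by (simp add: sum_nonneg)
  finally show ?thesis using sigma N by (simp add: field_simps)
qed

lemma speed_sq_le_E: "i < N \<Longrightarrow> (norm (v i t))\<^sup>2 \<le> real N * E t"
proof -
  assume i: "i < N"
  have "(1 / real N) * (norm (v i t))\<^sup>2 \<le> (1 / real N) * (\<Sum>k<N. (norm (v k t))\<^sup>2)"
    using i by (intro mult_left_mono member_le_sum) auto
  also have "\<dots> \<le> E t" unfolding E_def energy_def using sigma by (simp add: sum_nonneg)
  finally show ?thesis using N by (simp add: field_simps)
qed

definition dist_sq_bound :: real where
  "dist_sq_bound = 2 * (real N)\<^sup>2 * E 0 / \<sigma>"

lemma dist_sq_bound_less_4: "dist_sq_bound < 4"
  using energy_small sigma unfolding dist_sq_bound_def E_def by (simp add: field_simps)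

lemma dist_sq_bound_nonneg: "dist_sq_bound \<ge> 0"
  unfolding dist_sq_bound_def using E_nonneg sigma by simp

lemma dist_sq_le_bound:
  assumes "0 \<le> t" "\<And>s. s \<in> {0..t} \<Longrightarrow> on_sphere s" "i < N" "j < N"
  shows "(norm (x i t - x j t))\<^sup>2 \<le> dist_sq_bound"
proof -
  have "E t \<le> E 0" using assms by (intro E_decreasing_on_sphere) auto
  then have "2 * (real N)\<^sup>2 * E t / \<sigma> \<le> dist_sq_bound"
    unfolding dist_sq_bound_def using sigma by (intro divide_right_mono mult_left_mono) auto
  then show ?thesis using dist_sq_le_E[OF assms(3,4), of t] by linarith
qed

subsection \<open>Invariance of the sphere\<close>

definition sqnorm :: "nat \<Rightarrow> real \<Rightarrow> real" where
  "sqnorm i t = x i t \<bullet> x i t"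

definition radial :: "nat \<Rightarrow> real \<Rightarrow> real" where
  "radial i t = x i t \<bullet> v i t"

definition sphere_defect :: "real \<Rightarrow> real" where
  "sphere_defect t = (\<Sum>i<N. (sqnorm i t - 1)\<^sup>2 + (radial i t)\<^sup>2)"

definition sphere_defect' :: "real \<Rightarrow> real" where
  "sphere_defect' t = (\<Sum>i<N. 2 * (sqnorm i t - 1) * (2 * radial i t)
     + 2 * radial i t * (v i t \<bullet> v i t + x i t \<bullet> accel i t))"

lemma sphere_defect_nonneg: "sphere_defect t \<ge> 0"
  unfolding sphere_defect_def by (intro sum_nonneg) auto

lemma sphere_defect_eq_0_iff: "sphere_defect t = 0 \<longleftrightarrow> on_sphere t"
proof -
  have "sphere_defect t = 0 \<longleftrightarrow> (\<forall>i<N. (sqnorm i t - 1)\<^sup>2 + (radial i t)\<^sup>2 = 0)"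
    unfolding sphere_defect_def by (subst sum_nonneg_eq_0_iff) auto
  also have "\<dots> \<longleftrightarrow> on_sphere t"
    unfolding on_sphere_def sqnorm_def radial_def by (auto simp: norm_eq_1 add_nonneg_eq_0_iff)
  finally show ?thesis .
qed

lemma on_sphere_0: "on_sphere 0"
  unfolding on_sphere_def using init_sphere init_tangent by (simp add: inner_commute)

lemma sphere_defect_has_real_derivative:
  "t \<ge> 0 \<Longrightarrow> (sphere_defect has_real_derivative sphere_defect' t) (at t within {0..})"
proof -
  assume t: "t \<ge> 0"
  have "(sqnorm i has_real_derivative 2 * radial i t) (at t within {0..})" if "i < N" for i
    using has_real_derivative_inner[OF ode_x[OF that t] ode_x[OF that t]]
    unfolding sqnorm_def[abs_def] radial_def by (simp add: inner_commute)
  moreover have "(radial i has_real_derivative v i t \<bullet> v i t + x i t \<bullet> accel i t) (at t within {0..})"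
    if "i < N" for i
    using has_real_derivative_inner[OF ode_x[OF that t] v_has_vector_derivative[OF that t]]
    unfolding radial_def[abs_def] by (simp add: inner_commute)
  ultimately show ?thesis
    unfolding sphere_defect_def[abs_def] sphere_defect'_def
    by (intro DERIV_sum) (auto intro!: derivative_eq_intros)
qed

lemma inner_coupling:
  "x i t \<bullet> coupling i j t =
     (if x j t = - x i t then 0
      else \<psi> (norm (x i t - x j t)) * (if x j t = x i t then 1 else sqnorm i t) * radial j t)
     - \<psi> (norm (x i t - x j t)) * radial i t"
  unfolding coupling_def psiRv_def sqnorm_def radial_def
  by (auto simp: inner_diff_right inner_Rot_mult_vector)

lemma inner_accel:
  "x i t \<noteq> 0 \<Longrightarrow> x i t \<bullet> accel i t = - (v i t \<bullet> v i t) + (\<Sum>j<N. x i t \<bullet> coupling i j t) / real N"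
  unfolding accel_def
  by (simp add: inner_add_right inner_diff_right inner_sum_right dot_square_norm[symmetric]
      sum_divide_distrib)

lemma sq_le_sphere_defect:
  assumes "i < N"
  shows "(radial i t)\<^sup>2 \<le> sphere_defect t"
    and "(sqnorm i t - 1)\<^sup>2 + (radial i t)\<^sup>2 \<le> sphere_defect t"
proof -
  show sum: "(sqnorm i t - 1)\<^sup>2 + (radial i t)\<^sup>2 \<le> sphere_defect t"
    unfolding sphere_defect_def using assms by (intro member_le_sum) auto
  then show "(radial i t)\<^sup>2 \<le> sphere_defect t" using zero_le_power2[of "sqnorm i t - 1"] by linarith
qed

lemma abs_radial_mult_le_sphere_defect:
  assumes "i < N" "j < N"
  shows "\<bar>radial i t\<bar> * \<bar>radial j t\<bar> \<le> sphere_defect t"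
proof -
  have "2 * (\<bar>radial i t\<bar> * \<bar>radial j t\<bar>) \<le> (radial i t)\<^sup>2 + (radial j t)\<^sup>2"
    using sum_squares_bound[of "\<bar>radial i t\<bar>" "\<bar>radial j t\<bar>"] by (simp add: power2_eq_square)
  then show ?thesis using sq_le_sphere_defect(1)[OF assms(1), of t] sq_le_sphere_defect(1)[OF assms(2), of t]
    by linarith
qed

lemma sqnorm_radial_le_sphere_defect:
  assumes "i < N"
  shows "(sqnorm i t - 1) * radial i t \<le> sphere_defect t"
proof -
  have "0 \<le> (sqnorm i t - 1 - radial i t)\<^sup>2" by simp
  then have "2 * ((sqnorm i t - 1) * radial i t) \<le> (sqnorm i t - 1)\<^sup>2 + (radial i t)\<^sup>2"
    by (simp add: power2_eq_square algebra_simps)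
  then show ?thesis
    using sq_le_sphere_defect(2)[OF assms, of t] zero_le_power2[of "sqnorm i t - 1"] zero_le_power2[of "radial i t"]
    by linarith
qed

text \<open>The bounds are strict so that, by continuity, they persist for a short time after any
  moment at which they hold.\<close>

definition near_sphere :: "real \<Rightarrow> bool" where
  "near_sphere s \<longleftrightarrow> (\<forall>i<N. \<forall>j<N.
     1/2 < norm (x i s) \<and> norm (x i s) < 4/3 \<and> norm (x i s - x j s) < 2)"

lemma abs_inner_coupling_le:
  assumes near: "near_sphere s" and i: "i < N" and j: "j < N"
  shows "\<bar>x i s \<bullet> coupling i j s\<bar> \<le> \<psi> 0 * (2 * \<bar>radial j s\<bar> + \<bar>radial i s\<bar>)"
proof -
  let ?p = "\<psi> (norm (x i s - x j s))"
  have "norm (x i s - x j s) \<in> {0..2}" using near i j by (auto simp: near_sphere_def less_imp_le)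
  then have p: "0 \<le> ?p" "?p \<le> \<psi> 0" using psi_bounds by auto
  have "sqnorm i s = (norm (x i s))\<^sup>2" by (simp add: sqnorm_def power2_norm_eq_inner)
  also have "\<dots> \<le> (4/3)\<^sup>2"
    using near i unfolding near_sphere_def by (intro power_mono) (simp_all add: less_imp_le)
  finally have k: "\<bar>if x j s = x i s then 1 else sqnorm i s\<bar> \<le> 2"
    by (auto simp: sqnorm_def power2_eq_square)
  have "\<bar>?p * (if x j s = x i s then 1 else sqnorm i s) * radial j s\<bar> \<le> \<psi> 0 * 2 * \<bar>radial j s\<bar>"
    unfolding abs_mult using p k by (intro mult_mono) auto
  moreover have "\<bar>?p * radial i s\<bar> \<le> \<psi> 0 * \<bar>radial i s\<bar>"
    unfolding abs_mult using p by (intro mult_mono) auto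
  moreover have "0 \<le> \<psi> 0 * \<bar>radial j s\<bar>" using p by simp
  ultimately show ?thesis unfolding inner_coupling by (auto simp: algebra_simps)
qed

lemma radial_rate_le:
  assumes near: "near_sphere s" and i: "i < N"
  shows "2 * radial i s * (v i s \<bullet> v i s + x i s \<bullet> accel i s) \<le> 6 * \<psi> 0 * sphere_defect s"
proof -
  let ?Q = "sphere_defect s"
  have psi0: "0 \<le> \<psi> 0" using psi_bounds[of 0] by auto
  have "x i s \<noteq> 0" using near i by (auto simp: near_sphere_def)
  then have rate: "v i s \<bullet> v i s + x i s \<bullet> accel i s = (\<Sum>j<N. x i s \<bullet> coupling i j s) / real N"
    by (simp add: inner_accel)
  have "radial i s * (\<Sum>j<N. x i s \<bullet> coupling i j s)
      \<le> \<bar>radial i s\<bar> * (\<Sum>j<N. \<bar>x i s \<bullet> coupling i j s\<bar>)"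
    by (rule order_trans[OF abs_ge_self]) (simp add: abs_mult mult_left_mono)
  also have "\<dots> \<le> \<bar>radial i s\<bar> * (\<Sum>j<N. \<psi> 0 * (2 * \<bar>radial j s\<bar> + \<bar>radial i s\<bar>))"
    using abs_inner_coupling_le near i by (intro mult_left_mono sum_mono) auto
  also have "\<dots> = (\<Sum>j<N. \<psi> 0 * (2 * (\<bar>radial i s\<bar> * \<bar>radial j s\<bar>) + \<bar>radial i s\<bar> * \<bar>radial i s\<bar>))"
    by (simp add: sum_distrib_left algebra_simps)
  also have "\<dots> \<le> (\<Sum>j<N. \<psi> 0 * (3 * ?Q))"
  proof (intro sum_mono mult_left_mono psi0)
    fix j assume "j \<in> {..<N}"
    then show "2 * (\<bar>radial i s\<bar> * \<bar>radial j s\<bar>) + \<bar>radial i s\<bar> * \<bar>radial i s\<bar> \<le> 3 * ?Q"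
      using abs_radial_mult_le_sphere_defect[OF i, of j s] abs_radial_mult_le_sphere_defect[OF i i, of s]
      by simp
  qed
  finally have "radial i s * (\<Sum>j<N. x i s \<bullet> coupling i j s) \<le> real N * (3 * \<psi> 0 * ?Q)" by simp
  then show ?thesis unfolding rate using N by (simp add: field_simps)
qed

lemma sphere_defect'_le:
  assumes near: "near_sphere s"
  shows "sphere_defect' s \<le> real N * (4 + 6 * \<psi> 0) * sphere_defect s"
proof -
  have "2 * (sqnorm i s - 1) * (2 * radial i s) + 2 * radial i s * (v i s \<bullet> v i s + x i s \<bullet> accel i s)
      \<le> (4 + 6 * \<psi> 0) * sphere_defect s" if i: "i < N" for i
  proof -
    have "2 * (sqnorm i s - 1) * (2 * radial i s) = 4 * ((sqnorm i s - 1) * radial i s)" by simp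
    then have "2 * (sqnorm i s - 1) * (2 * radial i s) \<le> 4 * sphere_defect s"
      using sqnorm_radial_le_sphere_defect[OF i, of s] by linarith
    with radial_rate_le[OF near i] show ?thesis unfolding distrib_right by linarith
  qed
  then have "sphere_defect' s \<le> (\<Sum>i<N. (4 + 6 * \<psi> 0) * sphere_defect s)"
    unfolding sphere_defect'_def by (intro sum_mono) auto
  then show ?thesis by simp
qed

lemma on_sphere_closed:
  assumes T: "T \<ge> 0" and before: "\<And>s. 0 \<le> s \<Longrightarrow> s < T \<Longrightarrow> on_sphere s"
  shows "on_sphere T"
proof (cases "T = 0")
  case True
  then show ?thesis using on_sphere_0 by simp
next
  case False
  then have "0 < T" using T by simp
  have "sphere_defect T = 0"
  proof (rule continuous_constant_on_closure[where S = "{0..<T}" and f = sphere_defect])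
    show "continuous_on (closure {0..<T}) sphere_defect"
      unfolding closure_atLeastLessThan[OF \<open>0 < T\<close>]
    proof (rule DERIV_continuous_on[where D = sphere_defect'])
      fix s assume "s \<in> {0..T}"
      then have "(sphere_defect has_real_derivative sphere_defect' s) (at s within {0..})"
        by (intro sphere_defect_has_real_derivative) auto
      then show "(sphere_defect has_real_derivative sphere_defect' s) (at s within {0..T})"
        by (rule DERIV_subset) auto
    qed
    show "sphere_defect s = 0" if "s \<in> {0..<T}" for s
      using before that sphere_defect_eq_0_iff by simp
    show "T \<in> closure {0..<T}" using \<open>0 < T\<close> by simp
  qed
  then show ?thesis using sphere_defect_eq_0_iff by simp
qed

lemma eventually_near_sphere:
  assumes T: "T \<ge> 0" and near: "near_sphere T"
  shows "eventually near_sphere (at T within {0..})"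
proof -
  have "eventually (\<lambda>s. \<forall>i\<in>{..<N}. \<forall>j\<in>{..<N}.
      1/2 < norm (x i s) \<and> norm (x i s) < 4/3 \<and> norm (x i s - x j s) < 2) (at T within {0..})"
  proof (intro eventually_ball_finite finite_lessThan ballI eventually_conj)
    fix i j assume i: "i \<in> {..<N}" and j: "j \<in> {..<N}"
    have "(x i \<longlongrightarrow> x i T) (at T within {0..})" "(x j \<longlongrightarrow> x j T) (at T within {0..})"
      using x_continuous_on i j T by (auto simp: continuous_on_def)
    then have lim_i: "((\<lambda>s. norm (x i s)) \<longlongrightarrow> norm (x i T)) (at T within {0..})"
      and lim_ij: "((\<lambda>s. norm (x i s - x j s)) \<longlongrightarrow> norm (x i T - x j T)) (at T within {0..})"
      by (auto intro!: tendsto_norm tendsto_diff)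
    have "1/2 < norm (x i T)" "norm (x i T) < 4/3" "norm (x i T - x j T) < 2"
      using near i j unfolding near_sphere_def by auto
    then show "eventually (\<lambda>s. 1/2 < norm (x i s)) (at T within {0..})"
      and "eventually (\<lambda>s. norm (x i s) < 4/3) (at T within {0..})"
      and "eventually (\<lambda>s. norm (x i s - x j s) < 2) (at T within {0..})"
      using order_tendstoD[OF lim_i] order_tendstoD[OF lim_ij] by blast+
  qed
  then show ?thesis by (rule eventually_mono) (simp add: near_sphere_def)
qed

lemma on_sphere_extend:
  assumes T: "T \<ge> 0" and upto: "\<And>s. 0 \<le> s \<Longrightarrow> s \<le> T \<Longrightarrow> on_sphere s"
  shows "\<exists>h>0. \<forall>s\<in>{T..T+h}. on_sphere s"
proof -
  have "norm (x i T - x j T) < 2" if "i < N" "j < N" for i j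
  proof -
    have "(norm (x i T - x j T))\<^sup>2 < 2\<^sup>2"
      using dist_sq_le_bound[OF T _ that] upto dist_sq_bound_less_4 by fastforce
    then show ?thesis by (rule power_less_imp_less_base) simp
  qed
  then have near: "near_sphere T"
    using upto[OF T order.refl] unfolding near_sphere_def on_sphere_def by auto
  obtain e where "e > 0" and e: "\<forall>s\<in>{0..}. 0 < dist s T \<and> dist s T < e \<longrightarrow> near_sphere s"
    using eventually_near_sphere[OF T near] unfolding eventually_at by auto
  define h where "h = e / 2"
  have near_h: "near_sphere s" if "s \<in> {T..T+h}" for s
    using that near e T \<open>e > 0\<close> by (cases "s = T") (auto simp: h_def dist_real_def)
  have "sphere_defect s = 0" if "s \<in> {T..T+h}" for s
  proof (rule gronwall_zero[where Q = sphere_defect and Q' = sphere_defect' and a = T and b = "T + h"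
        and L = "real N * (4 + 6 * \<psi> 0)"])
    fix r assume r: "r \<in> {T..T+h}"
    then have "(sphere_defect has_real_derivative sphere_defect' r) (at r within {0..})"
      using T by (intro sphere_defect_has_real_derivative) auto
    then show "(sphere_defect has_real_derivative sphere_defect' r) (at r within {T..T+h})"
      by (rule DERIV_subset) (use T in auto)
    show "sphere_defect' r \<le> real N * (4 + 6 * \<psi> 0) * sphere_defect r"
      using near_h[OF r] by (rule sphere_defect'_le)
  qed (use that upto[OF T order.refl] sphere_defect_nonneg sphere_defect_eq_0_iff in auto)
  then show ?thesis using \<open>e > 0\<close> sphere_defect_eq_0_iff by (intro exI[of _ h]) (auto simp: h_def)
qed

theorem on_sphere_always: "t \<ge> 0 \<Longrightarrow> on_sphere t"
  by (rule nonneg_real_induct[OF on_sphere_closed on_sphere_extend])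

subsection \<open>Consequences of the energy bound\<close>

lemma index_pairs_nonempty: "{f i j |i j. i < N \<and> j < N} \<noteq> {}"
  using N by (auto intro!: exI[of _ 0])

lemma norm_x: "t \<ge> 0 \<Longrightarrow> i < N \<Longrightarrow> norm (x i t) = 1"
  using on_sphere_always unfolding on_sphere_def by auto

lemma x_inner_v: "t \<ge> 0 \<Longrightarrow> i < N \<Longrightarrow> x i t \<bullet> v i t = 0"
  using on_sphere_always unfolding on_sphere_def by auto

lemma E_decreasing: "0 \<le> t1 \<Longrightarrow> t1 \<le> t2 \<Longrightarrow> E t2 \<le> E t1"
  using E_decreasing_on_sphere on_sphere_always by auto

lemma dist_sq_le: "t \<ge> 0 \<Longrightarrow> i < N \<Longrightarrow> j < N \<Longrightarrow> (norm (x i t - x j t))\<^sup>2 \<le> dist_sq_bound"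
  using dist_sq_le_bound on_sphere_always by auto

lemma not_antipodal:
  assumes "t \<ge> 0" "i < N" "j < N"
  shows "x j t \<noteq> - x i t"
proof
  assume "x j t = - x i t"
  then have "x i t - x j t = 2 *\<^sub>R x i t" by (simp add: scaleR_2)
  then have "(norm (x i t - x j t))\<^sup>2 = 4" using norm_x[OF assms(1,2)] by simp
  then show False using dist_sq_le[OF assms] dist_sq_bound_less_4 by simp
qed

lemma norm_add_sq:
  "t \<ge> 0 \<Longrightarrow> i < N \<Longrightarrow> j < N \<Longrightarrow> (norm (x i t + x j t))\<^sup>2 = 4 - (norm (x i t - x j t))\<^sup>2"
  using norm_x[of t i] norm_x[of t j]
  by (simp add: power2_norm_eq_inner inner_add_left inner_add_right inner_diff_left
      inner_diff_right inner_commute norm_eq_1)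

theorem Liminf_min_norm_add_pos:
  "Liminf at_top (\<lambda>t. ereal (Min {norm (x i t + x j t) | i j. i < N \<and> j < N})) > 0"
proof -
  define m where "m = sqrt (4 - dist_sq_bound)"
  have "m > 0" unfolding m_def using dist_sq_bound_less_4 by simp
  have "m \<le> Min {norm (x i t + x j t) | i j. i < N \<and> j < N}" if t: "t \<ge> 0" for t
  proof -
    have "m \<le> norm (x i t + x j t)" if "i < N" "j < N" for i j
    proof -
      have "4 - dist_sq_bound \<le> (norm (x i t + x j t))\<^sup>2"
        using norm_add_sq[OF t that] dist_sq_le[OF t that] by simp
      then have "m \<le> sqrt ((norm (x i t + x j t))\<^sup>2)" unfolding m_def by (rule real_sqrt_le_mono)
      then show ?thesis by simp
    qed
    then show ?thesis by (subst Min_ge_iff[OF finite_index_pairs index_pairs_nonempty]) auto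
  qed
  then have "eventually (\<lambda>t. ereal m \<le> ereal (Min {norm (x i t + x j t) | i j. i < N \<and> j < N})) at_top"
    by (intro eventually_at_top_linorderI[of 0]) auto
  then have "ereal m \<le> Liminf at_top (\<lambda>t. ereal (Min {norm (x i t + x j t) | i j. i < N \<and> j < N}))"
    by (rule Liminf_bounded)
  then show ?thesis using \<open>m > 0\<close> by (meson ereal_less(2) less_le_trans)
qed

subsection \<open>Uniform continuity of the dissipation\<close>

definition speed_bound :: real where
  "speed_bound = sqrt (real N * E 0)"

definition accel_bound :: real where
  "accel_bound = speed_bound\<^sup>2 + 2 * \<psi> 0 * speed_bound + 2 * \<sigma>"

lemma speed_bound_nonneg: "speed_bound \<ge> 0"
  unfolding speed_bound_def using E_nonneg by simp

lemma accel_bound_nonneg: "accel_bound \<ge> 0"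
  unfolding accel_bound_def using speed_bound_nonneg psi_bounds[of 0] sigma by simp

lemma norm_v_le: "t \<ge> 0 \<Longrightarrow> i < N \<Longrightarrow> norm (v i t) \<le> speed_bound"
proof -
  assume t: "t \<ge> 0" and i: "i < N"
  have "real N * E t \<le> real N * E 0" using E_decreasing[of 0 t] t by (intro mult_left_mono) auto
  then have "(norm (v i t))\<^sup>2 \<le> real N * E 0" using speed_sq_le_E[OF i, of t] by linarith
  then show ?thesis unfolding speed_bound_def by (simp add: real_le_rsqrt)
qed

lemma psi_dist_bounds:
  "t \<ge> 0 \<Longrightarrow> i < N \<Longrightarrow> j < N \<Longrightarrow> 0 \<le> \<psi> (norm (x i t - x j t)) \<and> \<psi> (norm (x i t - x j t)) \<le> \<psi> 0"
  using psi_bounds on_sphere_dist_le on_sphere_always by auto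

lemma norm_coupling_le:
  assumes t: "t \<ge> 0" and i: "i < N" and j: "j < N"
  shows "norm (coupling i j t) \<le> 2 * \<psi> 0 * speed_bound"
proof -
  have "norm (psiRv \<psi> (x i t) (x j t) (v j t)) \<le> \<psi> 0 * speed_bound"
  proof (cases "x j t = - x i t")
    case True
    then show ?thesis unfolding psiRv_def using psi_bounds[of 0] speed_bound_nonneg by simp
  next
    case False
    have "norm (Rot (x j t) (x i t) *v v j t) = norm (v j t)"
      using False norm_x[OF t i] norm_x[OF t j] x_inner_v[OF t j]
      by (intro norm_Rot_mult_vector_tangent) auto
    then have "norm (psiRv \<psi> (x i t) (x j t) (v j t)) = \<psi> (norm (x i t - x j t)) * norm (v j t)"
      unfolding psiRv_def using False psi_dist_bounds[OF t i j] by simp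
    also have "\<dots> \<le> \<psi> 0 * speed_bound"
      using psi_dist_bounds[OF t i j] norm_v_le[OF t j] by (intro mult_mono) auto
    finally show ?thesis .
  qed
  moreover have "norm (\<psi> (norm (x i t - x j t)) *\<^sub>R v i t) \<le> \<psi> 0 * speed_bound"
    using psi_dist_bounds[OF t i j] norm_v_le[OF t i] by (simp add: mult_mono)
  ultimately show ?thesis
    using norm_triangle_ineq4[of "psiRv \<psi> (x i t) (x j t) (v j t)" "\<psi> (norm (x i t - x j t)) *\<^sub>R v i t"]
    unfolding coupling_def by linarith
qed

lemma norm_accel_le:
  assumes t: "t \<ge> 0" and i: "i < N"
  shows "norm (accel i t) \<le> accel_bound"
proof -
  have xi: "norm (x i t) = 1" by (rule norm_x[OF t i])
  have centripetal: "norm (- ((norm (v i t))\<^sup>2 / (norm (x i t))\<^sup>2) *\<^sub>R x i t) \<le> speed_bound\<^sup>2"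
    using xi norm_v_le[OF t i] by (simp add: power_mono)
  have "norm (\<Sum>j<N. (1 / real N) *\<^sub>R coupling i j t) \<le> (\<Sum>j<N. (1 / real N) * (2 * \<psi> 0 * speed_bound))"
    using norm_coupling_le[OF t i]
    by (intro order_trans[OF norm_sum] sum_mono) (simp add: divide_right_mono)
  also have "\<dots> = 2 * \<psi> 0 * speed_bound" using N by simp
  finally have alignment: "norm (\<Sum>j<N. (1 / real N) *\<^sub>R coupling i j t) \<le> 2 * \<psi> 0 * speed_bound" .
  have "norm ((norm (x i t))\<^sup>2 *\<^sub>R x k t - (x i t \<bullet> x k t) *\<^sub>R x i t) \<le> 2" if k: "k < N" for k
  proof -
    have "\<bar>x i t \<bullet> x k t\<bar> \<le> 1"
      using Cauchy_Schwarz_ineq2[of "x i t" "x k t"] xi norm_x[OF t k] by simp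
    then show ?thesis
      using norm_triangle_ineq4[of "(norm (x i t))\<^sup>2 *\<^sub>R x k t" "(x i t \<bullet> x k t) *\<^sub>R x i t"] xi norm_x[OF t k]
      by simp
  qed
  then have "norm (\<Sum>k<N. (\<sigma> / real N) *\<^sub>R ((norm (x i t))\<^sup>2 *\<^sub>R x k t - (x i t \<bullet> x k t) *\<^sub>R x i t))
      \<le> (\<Sum>k<N. \<sigma> / real N * 2)"
    using sigma
    by (intro order_trans[OF norm_sum] sum_mono) (auto intro!: divide_right_mono mult_left_mono)
  also have "\<dots> = 2 * \<sigma>" using N by simp
  finally have attraction: "norm (\<Sum>k<N. (\<sigma> / real N) *\<^sub>R
      ((norm (x i t))\<^sup>2 *\<^sub>R x k t - (x i t \<bullet> x k t) *\<^sub>R x i t)) \<le> 2 * \<sigma>" .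
  show ?thesis
    using centripetal alignment attraction norm_triangle_ineq[of _ "\<Sum>j<N. (1 / real N) *\<^sub>R coupling i j t"]
      norm_triangle_ineq[of _ "\<Sum>k<N. (\<sigma> / real N) *\<^sub>R ((norm (x i t))\<^sup>2 *\<^sub>R x k t - (x i t \<bullet> x k t) *\<^sub>R x i t)"]
    unfolding accel_def accel_bound_def by (smt (verit))
qed

lemma lipschitz_x: "i < N \<Longrightarrow> speed_bound-lipschitz_on {0..} (x i)"
  using ode_x norm_v_le speed_bound_nonneg
  by (intro bounded_vector_derivative_imp_lipschitz[where f' = "v i"]) auto

lemma lipschitz_v: "i < N \<Longrightarrow> accel_bound-lipschitz_on {0..} (v i)"
  using v_has_vector_derivative norm_accel_le accel_bound_nonneg
  by (intro bounded_vector_derivative_imp_lipschitz[where f' = "accel i"]) auto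

text \<open>Away from antipodal pairs \<open>dissip\<close> is a continuous function of the state
  \<open>(x\<^sub>i, x\<^sub>j, v\<^sub>i, v\<^sub>j)\<close>; the energy bound confines the states to a compact set, and the
  trajectories are Lipschitz, so \<open>dissip\<close> is uniformly continuous in time.\<close>

definition dissip_state :: "(real^3) \<times> (real^3) \<times> (real^3) \<times> (real^3) \<Rightarrow> real" where
  "dissip_state z = \<psi> (norm (fst z - fst (snd z))) *
     (norm (rot_unit (fst (snd z)) (fst z) (snd (snd (snd z))) - fst (snd (snd z))))\<^sup>2"

definition pair_state :: "nat \<Rightarrow> nat \<Rightarrow> real \<Rightarrow> (real^3) \<times> (real^3) \<times> (real^3) \<times> (real^3)" where
  "pair_state i j t = (x i t, x j t, v i t, v j t)"

definition reachable_states :: "((real^3) \<times> (real^3) \<times> (real^3) \<times> (real^3)) set" where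
  "reachable_states = cball 0 (2 + 2 * speed_bound)
     \<inter> {z. 2 - dist_sq_bound / 2 \<le> 1 + fst (snd z) \<bullet> fst z} \<inter> {z. norm (fst z - fst (snd z)) \<le> 2}"

lemma dissip_eq_dissip_state: "t \<ge> 0 \<Longrightarrow> i < N \<Longrightarrow> j < N \<Longrightarrow> dissip i j t = dissip_state (pair_state i j t)"
  unfolding dissip_def dissip_state_def pair_state_def
  using not_antipodal Rot_mult_vector_unit norm_x by simp

lemma pair_state_reachable:
  assumes t: "t \<ge> 0" and i: "i < N" and j: "j < N"
  shows "pair_state i j t \<in> reachable_states"
proof -
  have "norm (pair_state i j t) \<le> norm (x i t) + (norm (x j t) + (norm (v i t) + norm (v j t)))"
    unfolding pair_state_def by (meson add_left_mono norm_Pair_le order_trans)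
  also have "\<dots> \<le> 2 + 2 * speed_bound"
    using norm_x[OF t i] norm_x[OF t j] norm_v_le[OF t i] norm_v_le[OF t j] by simp
  finally have "pair_state i j t \<in> cball 0 (2 + 2 * speed_bound)" by simp
  moreover have "(norm (x i t - x j t))\<^sup>2 = 2 - 2 * (x j t \<bullet> x i t)"
    using norm_x[OF t i] norm_x[OF t j]
    by (simp add: power2_norm_eq_inner inner_diff_left inner_diff_right inner_commute norm_eq_1)
  then have "2 - dist_sq_bound / 2 \<le> 1 + x j t \<bullet> x i t" using dist_sq_le[OF t i j] by simp
  moreover have "norm (x i t - x j t) \<le> 2" using on_sphere_dist_le on_sphere_always t i j by auto
  ultimately show ?thesis unfolding reachable_states_def pair_state_def by simp
qed

lemma uniformly_continuous_on_dissip_state: "uniformly_continuous_on reachable_states dissip_state"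
proof (rule compact_uniformly_continuous)
  show "compact reachable_states"
    unfolding reachable_states_def
    by (intro compact_Int_closed compact_cball closed_Collect_le continuous_intros)
  have "1 + fst (snd z) \<bullet> fst z \<noteq> 0" if "z \<in> reachable_states" for z
    using that dist_sq_bound_less_4 unfolding reachable_states_def by auto
  then have "continuous_on reachable_states (\<lambda>z. rot_unit (fst (snd z)) (fst z) (snd (snd (snd z))))"
    unfolding rot_unit_def by (intro continuous_intros continuous_on_cross) (auto simp: inner_commute)
  moreover have "continuous_on reachable_states (\<lambda>z. \<psi> (norm (fst z - fst (snd z))))"
    by (rule continuous_on_compose2[OF psi_continuous_on])
       (intro continuous_intros, auto simp: reachable_states_def)
  ultimately show "continuous_on reachable_states dissip_state"
    unfolding dissip_state_def[abs_def] by (intro continuous_intros)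
qed

lemma uniformly_continuous_on_pair_state:
  assumes "i < N" "j < N"
  shows "uniformly_continuous_on {0..} (pair_state i j)"
  using lipschitz_on_uniformly_continuous[OF lipschitz_on_Pair[OF lipschitz_x[OF assms(1)]
      lipschitz_on_Pair[OF lipschitz_x[OF assms(2)] lipschitz_on_Pair[OF lipschitz_v[OF assms(1)] lipschitz_v[OF assms(2)]]]]]
  by (simp add: pair_state_def[abs_def])

lemma uniformly_continuous_on_dissipation: "uniformly_continuous_on {0..} dissipation"
proof -
  have "uniformly_continuous_on {0..} (dissip i j)" if "i < N" "j < N" for i j
  proof -
    have "uniformly_continuous_on (pair_state i j ` {0..}) dissip_state"
      using pair_state_reachable that
      by (intro uniformly_continuous_on_subset[OF uniformly_continuous_on_dissip_state]) auto
    then have "uniformly_continuous_on {0..} (\<lambda>t. dissip_state (pair_state i j t))"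
      by (rule uniformly_continuous_on_compose[OF uniformly_continuous_on_pair_state[OF that]])
    then show ?thesis
      using that dissip_eq_dissip_state unfolding uniformly_continuous_on_def by simp
  qed
  then show ?thesis
    unfolding dissipation_def[abs_def] by (intro uniformly_continuous_on_sum) auto
qed

lemma dissipation_tendsto_0: "(dissipation \<longlongrightarrow> 0) at_top"
proof (rule barbalat[where E = "\<lambda>t. (real N)\<^sup>2 * E t" and E' = "\<lambda>t. (real N)\<^sup>2 * E' t"])
  show "((\<lambda>t. (real N)\<^sup>2 * E t) has_real_derivative (real N)\<^sup>2 * E' t) (at t within {0..})"
    if "t \<ge> 0" for t
    using E_has_real_derivative[OF that] by (rule DERIV_cmult)
  show "(real N)\<^sup>2 * E' t \<le> - dissipation t" if "t \<ge> 0" for t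
    using E'_on_sphere[OF on_sphere_always[OF that]] N by simp
  show "bdd_below ((\<lambda>t. (real N)\<^sup>2 * E t) ` {0..})"
    using E_nonneg by (intro bdd_belowI[of _ 0]) auto
qed (use dissipation_nonneg on_sphere_always uniformly_continuous_on_dissipation in auto)

definition psi_min :: real where
  "psi_min = \<psi> (sqrt dist_sq_bound)"

lemma psi_min_pos: "psi_min > 0"
  unfolding psi_min_def using dist_sq_bound_less_4 dist_sq_bound_nonneg
  by (intro psi_pos) (auto simp: real_sqrt_less_iff[of _ 4, simplified])

lemma align_err_le:
  assumes t: "t \<ge> 0" and i: "i < N" and j: "j < N"
  shows "align_err (x i t) (x j t) (v i t) (v j t) \<le> 2 * sqrt (dissipation t / psi_min)"
proof -
  define w where "w = norm (Rot (x j t) (x i t) *v v j t - v i t)"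
  have "norm (x i t - x j t) \<le> sqrt dist_sq_bound" using dist_sq_le[OF t i j] by (simp add: real_le_rsqrt)
  moreover have "sqrt dist_sq_bound \<le> 2"
    using dist_sq_bound_less_4 dist_sq_bound_nonneg by (simp add: real_sqrt_le_iff[of _ 4, simplified])
  ultimately have "psi_min \<le> \<psi> (norm (x i t - x j t))" unfolding psi_min_def by (intro psi_decr) auto
  then have "psi_min * w\<^sup>2 \<le> dissip i j t"
    unfolding dissip_def w_def using not_antipodal[OF t i j] by (simp add: mult_right_mono)
  also have "\<dots> \<le> dissipation t"
    unfolding dissipation_def using dissip_nonneg on_sphere_always[OF t] i j
    by (intro order_trans[OF member_le_sum[of j] member_le_sum[of i]] sum_nonneg) auto
  finally have "w \<le> sqrt (dissipation t / psi_min)"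
    using psi_min_pos by (simp add: real_le_rsqrt field_simps w_def)
  moreover have "norm (x i t + x j t) \<le> 2"
    using norm_triangle_ineq[of "x i t" "x j t"] norm_x[OF t i] norm_x[OF t j] by simp
  ultimately show ?thesis
    unfolding align_err_def w_def[symmetric] using not_antipodal[OF t i j]
    by (simp add: mult_mono w_def)
qed

theorem Max_align_err_tendsto_0:
  "((\<lambda>t. Max {align_err (x i t) (x j t) (v i t) (v j t) | i j. i < N \<and> j < N}) \<longlongrightarrow> 0) at_top"
proof (rule tendsto_sandwich[where f = "\<lambda>_. 0" and h = "\<lambda>t. 2 * sqrt (dissipation t / psi_min)"])
  show "eventually (\<lambda>t. 0 \<le> Max {align_err (x i t) (x j t) (v i t) (v j t) | i j. i < N \<and> j < N}) at_top"
  proof (intro always_eventually allI)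
    fix t
    have "0 \<le> align_err (x 0 t) (x 0 t) (v 0 t) (v 0 t)" by (simp add: align_err_def)
    moreover have "align_err (x 0 t) (x 0 t) (v 0 t) (v 0 t) \<in> {align_err (x i t) (x j t) (v i t) (v j t) | i j. i < N \<and> j < N}"
      using N by (auto intro!: exI[of _ 0])
    ultimately show "0 \<le> Max {align_err (x i t) (x j t) (v i t) (v j t) | i j. i < N \<and> j < N}"
      by (rule order_trans[OF _ Max_ge[OF finite_index_pairs]])
  qed
  show "eventually (\<lambda>t. Max {align_err (x i t) (x j t) (v i t) (v j t) | i j. i < N \<and> j < N}
      \<le> 2 * sqrt (dissipation t / psi_min)) at_top"
  proof (intro eventually_at_top_linorderI[of 0])
    fix t :: real assume "t \<ge> 0"
    then show "Max {align_err (x i t) (x j t) (v i t) (v j t) | i j. i < N \<and> j < N}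
        \<le> 2 * sqrt (dissipation t / psi_min)"
      using align_err_le by (subst Max_le_iff[OF finite_index_pairs index_pairs_nonempty]) auto
  qed
  have "((\<lambda>t. 2 * sqrt (dissipation t / psi_min)) \<longlongrightarrow> 2 * sqrt (0 / psi_min)) at_top"
    using psi_min_pos by (intro tendsto_intros dissipation_tendsto_0) auto
  then show "((\<lambda>t. 2 * sqrt (dissipation t / psi_min)) \<longlongrightarrow> 0) at_top" by simp
qed simp

end

theorem theorem4p7:
  fixes N :: nat and \<sigma> :: real
    and \<psi> \<psi>' :: "real \<Rightarrow> real"
    and x v :: "nat \<Rightarrow> real \<Rightarrow> real^3"
  assumes N: "N \<ge> 1"
    and sigma: "\<sigma> > 0"
    and psi_nonneg: "\<And>s. s \<in> {0..2} \<Longrightarrow> \<psi> s \<ge> 0"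
    and psi_decr: "\<And>a b. 0 \<le> a \<Longrightarrow> a \<le> b \<Longrightarrow> b \<le> 2 \<Longrightarrow> \<psi> b \<le> \<psi> a"
    and psi_deriv: "\<And>s. s \<in> {0..2} \<Longrightarrow> (\<psi> has_real_derivative \<psi>' s) (at s within {0..2})"
    and psi_C1: "continuous_on {0..2} \<psi>'"
    and psi_2: "\<psi> 2 = 0"
    and psi'_2: "\<psi>' 2 < 0"
    and ode_x: "\<And>i t. i < N \<Longrightarrow> t \<ge> 0 \<Longrightarrow>
        ((x i) has_vector_derivative v i t) (at t within {0..})"
    and ode_v: "\<And>i t. i < N \<Longrightarrow> t \<ge> 0 \<Longrightarrow>
        ((v i) has_vector_derivative
           (- ((norm (v i t))\<^sup>2 / (norm (x i t))\<^sup>2) *\<^sub>R x i t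
            + (\<Sum>j<N. (1 / real N) *\<^sub>R
                 (psiRv \<psi> (x i t) (x j t) (v j t) - \<psi> (norm (x i t - x j t)) *\<^sub>R v i t))
            + (\<Sum>k<N. (\<sigma> / real N) *\<^sub>R
                 ((norm (x i t))\<^sup>2 *\<^sub>R x k t - (x i t \<bullet> x k t) *\<^sub>R x i t))))
         (at t within {0..})"
    and init_sphere: "\<And>i. i < N \<Longrightarrow> norm (x i 0) = 1"
    and init_tangent: "\<And>i. i < N \<Longrightarrow> v i 0 \<bullet> x i 0 = 0"
    and energy_small: "2 * \<sigma> > (real N)\<^sup>2 * energy N \<sigma> (\<lambda>k. x k 0) (\<lambda>k. v k 0)"
  shows "((\<lambda>t. Max {align_err (x i t) (x j t) (v i t) (v j t) | i j. i < N \<and> j < N})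
            \<longlongrightarrow> 0) at_top
       \<and> Liminf at_top (\<lambda>t. ereal (Min {norm (x i t + x j t) | i j. i < N \<and> j < N})) > 0"
proof -
  interpret sphere_flocking N \<sigma> \<psi> \<psi>' x v
    by (rule sphere_flocking.intro) (fact assms)+
  show ?thesis using Max_align_err_tendsto_0 Liminf_min_norm_add_pos ..
qed

end
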